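(* Let $\mathcal{S}\subseteq\mathcal{G}$ with $|\mathcal{S}|=H$ and $t\in[T]$. Suppose Assumptions 1 and 2 hold and $\|K^{(t)}_{k,\mathcal{S}}-\hat K^{(t)}_{k,\mathcal{S}}\|\le\varepsilon$ for all $k\in\{0,\dots,N-1\}$, where $\varepsilon>0$. Let $\zeta_{\mathcal{S}}\ge1$ and $\eta_{\mathcal{S}}\in(0,1)$ be such that $\|\Psi^{(t)}_{k_2,k_1}(\mathcal{S})\|\le\zeta_{\mathcal{S}}\eta_{\mathcal{S}}^{k_2-k_1}$ for all $0\le k_1\le k_2\le N$. If $\varepsilon\le\frac{1-\eta_{\mathcal{S}}}{2\|B_{\mathcal{S}}\|\zeta_{\mathcal{S}}}$, then for all $0\le k_1\le k_2\le N$, $$\|\hat\Psi^{(t)}_{k_2,k_1}(\mathcal{S})\|\le\zeta_{\mathcal{S}}\Big(\frac{1+\eta_{\mathcal{S}}}{2}\Big)^{k_2-k_1}.$$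
   Context: $A\in\mathbb{R}^{n\times n}$, $B=[B_1\ \cdots\ B_q]\in\mathbb{R}^{n\times m}$ with $B_i\in\mathbb{R}^{n\times m_i}$, actuator set $\mathcal{G}=\{1,\dots,q\}$, $H\ge1$ fixed; for $\mathcal{S}=\{i_1<\dots<i_H\}$, $B_{\mathcal{S}}=[B_{i_1}\ \cdots\ B_{i_H}]$. Horizon $N\ge1$, rounds $T\ge1$; for each $t\in[T]$: $Q^{(t)},Q_f^{(t)}\in\mathbb{S}^n_+$, $R^{(t)}\in\mathbb{S}^m_{++}$, $R^{(t)}_{\mathcal{S}}$ the principal submatrix for actuators in $\mathcal{S}$. Riccati recursion: $P^{(t)}_{N,\mathcal{S}}=Q_f^{(t)}$ and for $k=N-1,\dots,0$: $K^{(t)}_{k,\mathcal{S}}=-(B_{\mathcal{S}}^\top P^{(t)}_{k+1,\mathcal{S}}B_{\mathcal{S}}+R^{(t)}_{\mathcal{S}})^{-1}B_{\mathcal{S}}^\top P^{(t)}_{k+1,\mathcal{S}}A$, $P^{(t)}_{k,\mathcal{S}}=Q^{(t)}+A^\top P^{(t)}_{k+1,\mathcal{S}}A-A^\top P^{(t)}_{k+1,\mathcal{S}}B_{\mathcal{S}}(B_{\mathcal{S}}^\top P^{(t)}_{k+1,\mathcal{S}}B_{\mathcal{S}}+R^{(t)}_{\mathcal{S}})^{-1}B_{\mathcal{S}}^\top P^{(t)}_{k+1,\mathcal{S}}A$; $\hat K^{(t)}_{k,\mathcal{S}}$ are the gains from the same recursion with $(A,B_{\mathcal{S}})$ replaced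 by estimates $(\hat A,\hat B_{\mathcal{S}})$. $\Psi^{(t)}_{k_2,k_1}(\mathcal{S})=(A+B_{\mathcal{S}}K^{(t)}_{k_2-1,\mathcal{S}})\cdots(A+B_{\mathcal{S}}K^{(t)}_{k_1,\mathcal{S}})$ and $\hat\Psi^{(t)}_{k_2,k_1}(\mathcal{S})=(A+B_{\mathcal{S}}\hat K^{(t)}_{k_2-1,\mathcal{S}})\cdots(A+B_{\mathcal{S}}\hat K^{(t)}_{k_1,\mathcal{S}})$ for $k_2>k_1$, both equal to $I$ when $k_2=k_1$. Assumption 1: for all $t$, $Q_f^{(t)}\succ0$, $\sigma_n(Q^{(t)})\ge1$, $\sigma_m(R^{(t)})\ge1$. Assumption 2: there are $\ell\in\{1,\dots,n-1\}$ and $\nu>0$ with $\sigma_n([B_{\mathcal{S}}\ AB_{\mathcal{S}}\ \cdots\ A^{\ell-1}B_{\mathcal{S}}])\ge\nu$ for all $|\mathcal{S}|=H$. *)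

theory Defs
  imports Complex_Main "Jordan_Normal_Form.Matrix" "Jordan_Normal_Form.DL_Submatrix"
begin

definition vnorm :: "real vec \<Rightarrow> real" where
  "vnorm v = sqrt (\<Sum>i<dim_vec v. (v $ i)^2)"

definition opnorm :: "real mat \<Rightarrow> real" where
  "opnorm M = Sup {vnorm (M *\<^sub>v v) | v. dim_vec v = dim_col M \<and> vnorm v \<le> 1}"

text \<open>sigma_n of a matrix with n rows (n = number of rows, at most the number of
  columns): the n-th largest singular value, i.e. the square root of the smallest
  eigenvalue of M M^T, i.e. the minimum of the norm of M^T y over unit vectors y.\<close>
definition sigma_n :: "real mat \<Rightarrow> real" where
  "sigma_n M = Inf {vnorm (transpose_mat M *\<^sub>v y) | y. dim_vec y = dim_row M \<and> vnorm y = 1}"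

definition sym_mat :: "nat \<Rightarrow> real mat \<Rightarrow> bool" where
  "sym_mat n M \<longleftrightarrow> M \<in> carrier_mat n n \<and> transpose_mat M = M"

definition psd_mat :: "nat \<Rightarrow> real mat \<Rightarrow> bool" where
  "psd_mat n M \<longleftrightarrow> sym_mat n M \<and> (\<forall>x. dim_vec x = n \<longrightarrow> x \<bullet> (M *\<^sub>v x) \<ge> 0)"

definition pd_mat :: "nat \<Rightarrow> real mat \<Rightarrow> bool" where
  "pd_mat n M \<longleftrightarrow> sym_mat n M \<and> (\<forall>x. dim_vec x = n \<longrightarrow> x \<noteq> 0\<^sub>v n \<longrightarrow> x \<bullet> (M *\<^sub>v x) > 0)"

text \<open>Matrix inverse (applied only to invertible square matrices).\<close>
definition minv :: "real mat \<Rightarrow> real mat" where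
  "minv M = (SOME X. X \<in> carrier_mat (dim_row M) (dim_row M) \<and>
      X * M = 1\<^sub>m (dim_row M) \<and> M * X = 1\<^sub>m (dim_row M))"

text \<open>Actuators are indexed 0..q-1; actuator i has ms i input columns, occupying
  columns blk_off ms i ..< blk_off ms i + ms i of B.\<close>
definition blk_off :: "(nat \<Rightarrow> nat) \<Rightarrow> nat \<Rightarrow> nat" where
  "blk_off ms i = (\<Sum>j<i. ms j)"

definition blk_cols :: "(nat \<Rightarrow> nat) \<Rightarrow> nat set \<Rightarrow> nat set" where
  "blk_cols ms S = (\<Union>i\<in>S. {blk_off ms i ..< blk_off ms i + ms i})"

text \<open>B_S = [B_{i_1} ... B_{i_H}] for S = {i_1 < ... < i_H}.\<close>
definition B_sel :: "(nat \<Rightarrow> nat) \<Rightarrow> real mat \<Rightarrow> nat set \<Rightarrow> real mat" where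
  "B_sel ms B S = submatrix B {0..<dim_row B} (blk_cols ms S)"

definition R_sel :: "(nat \<Rightarrow> nat) \<Rightarrow> real mat \<Rightarrow> nat set \<Rightarrow> real mat" where
  "R_sel ms R S = submatrix R (blk_cols ms S) (blk_cols ms S)"

text \<open>Controllability-type matrix [B, A B, ..., A^(l-1) B].\<close>
definition ctrb :: "real mat \<Rightarrow> real mat \<Rightarrow> nat \<Rightarrow> real mat" where
  "ctrb A Bs l = mat (dim_row Bs) (l * dim_col Bs)
     (\<lambda>(i,j). ((A ^\<^sub>m (j div dim_col Bs)) * Bs) $$ (i, j mod dim_col Bs))"

text \<open>ric_step computes P_k from P_{k+1}.\<close>
definition ric_step :: "real mat \<Rightarrow> real mat \<Rightarrow> real mat \<Rightarrow> real mat \<Rightarrow> real mat \<Rightarrow> real mat" where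
  "ric_step A Bs Q R P = Q + transpose_mat A * P * A
     - transpose_mat A * P * Bs * minv (transpose_mat Bs * P * Bs + R) * transpose_mat Bs * P * A"

text \<open>ric_back j = P_{N-j}.\<close>
fun ric_back :: "real mat \<Rightarrow> real mat \<Rightarrow> real mat \<Rightarrow> real mat \<Rightarrow> real mat \<Rightarrow> nat \<Rightarrow> real mat" where
  "ric_back A Bs Q Qf R 0 = Qf"
| "ric_back A Bs Q Qf R (Suc j) = ric_step A Bs Q R (ric_back A Bs Q Qf R j)"

definition ric_P :: "real mat \<Rightarrow> real mat \<Rightarrow> real mat \<Rightarrow> real mat \<Rightarrow> real mat \<Rightarrow> nat \<Rightarrow> nat \<Rightarrow> real mat" where
  "ric_P A Bs Q Qf R N k = ric_back A Bs Q Qf R (N - k)"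

definition ric_K :: "real mat \<Rightarrow> real mat \<Rightarrow> real mat \<Rightarrow> real mat \<Rightarrow> real mat \<Rightarrow> nat \<Rightarrow> nat \<Rightarrow> real mat" where
  "ric_K A Bs Q Qf R N k =
     (let P = ric_P A Bs Q Qf R N (Suc k) in
       - (minv (transpose_mat Bs * P * Bs + R) * transpose_mat Bs * P * A))"

text \<open>Closed-loop transition Psi_{k2,k1} = (A + Bs K_{k2-1}) ... (A + Bs K_{k1}),
  and the identity when k2 <= k1.\<close>
fun psi :: "real mat \<Rightarrow> real mat \<Rightarrow> (nat \<Rightarrow> real mat) \<Rightarrow> nat \<Rightarrow> nat \<Rightarrow> real mat" where
  "psi A Bs K 0 k1 = 1\<^sub>m (dim_row A)"
| "psi A Bs K (Suc k) k1 =
     (if Suc k \<le> k1 then 1\<^sub>m (dim_row A) else (A + Bs * K k) * psi A Bs K k k1)"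

end

theory Submission
  imports Defs "HOL-Analysis.L2_Norm" "Jordan_Normal_Form.Determinant"
begin

(* In step j the perturbed closed loop differs from the nominal one by B_S (K_j - Kh_j), hence
     Psih(k2,k1) = Psi(k2,k1) - sum_{k1 <= j < k2} Psi(k2,j+1) B_S (K_j - Kh_j) Psih(j,k1).
   Taking norms, a_d = |Psih(k1+d,k1)| satisfies the discrete Gronwall inequality
     a_d <= zeta eta^d + zeta beta sum_{l<d} eta^(d-1-l) a_l,   beta = |B_S| eps,
   and induction on d gives a_d <= zeta rho^d whenever zeta beta <= rho - eta, because
   (rho - eta) sum_{l<d} eta^(d-1-l) rho^l = rho^d - eta^d.  For rho = (1 + eta)/2 this
   condition is the hypothesis on eps.  Assumption 2 and the singular value bounds of
   Assumption 1 are not needed. *)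

section \<open>Euclidean and operator norms\<close>

lemma vnorm_eq_L2_set: "vnorm v = L2_set (\<lambda>i. v $ i) {..<dim_vec v}"
  unfolding vnorm_def L2_set_def by simp

lemma vnorm_nonneg: "0 \<le> vnorm v"
  unfolding vnorm_eq_L2_set by (rule L2_set_nonneg)

lemma vnorm_uminus [simp]: "vnorm (- v) = vnorm v"
  unfolding vnorm_def by simp

lemma vnorm_zero [simp]: "vnorm (0\<^sub>v n) = 0"
  unfolding vnorm_def by simp

lemma vnorm_smult: "vnorm (c \<cdot>\<^sub>v v) = \<bar>c\<bar> * vnorm v"
proof -
  have "vnorm (c \<cdot>\<^sub>v v) = L2_set (\<lambda>i. \<bar>c\<bar> * v $ i) {..<dim_vec v}"
    unfolding vnorm_def L2_set_def by (simp add: power_mult_distrib)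
  also have "\<dots> = \<bar>c\<bar> * vnorm v"
    unfolding vnorm_eq_L2_set by (simp add: L2_set_right_distrib)
  finally show ?thesis .
qed

lemma vnorm_eq_0D: "vnorm v = 0 \<Longrightarrow> v = 0\<^sub>v (dim_vec v)"
  unfolding vnorm_eq_L2_set by (intro eq_vecI) (auto simp: L2_set_eq_0_iff)

lemma abs_index_le_vnorm: "i < dim_vec v \<Longrightarrow> \<bar>v $ i\<bar> \<le> vnorm v"
  unfolding vnorm_eq_L2_set using member_le_L2_set[of "{..<dim_vec v}" i "\<lambda>i. \<bar>v $ i\<bar>"]
  by (simp add: L2_set_def)

lemma vnorm_add_le:
  assumes "dim_vec u = dim_vec v"
  shows "vnorm (u + v) \<le> vnorm u + vnorm v"
proof -
  have "vnorm (u + v) = L2_set (\<lambda>i. u $ i + v $ i) {..<dim_vec v}"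
    unfolding vnorm_eq_L2_set using assms by (intro L2_set_cong) auto
  also have "\<dots> \<le> vnorm u + vnorm v"
    unfolding vnorm_eq_L2_set using assms by (simp add: L2_set_triangle_ineq)
  finally show ?thesis .
qed

lemma vnorm_diff_le:
  assumes "dim_vec u = dim_vec v"
  shows "vnorm (u - v) \<le> vnorm u + vnorm v"
proof -
  have "u - v = u + - v"
    using assms by (intro minus_add_uminus_vec[of _ "dim_vec v"]) (auto intro: carrier_vecI)
  then have "vnorm (u - v) = vnorm (u + - v)" by (simp only:)
  also have "\<dots> \<le> vnorm u + vnorm (- v)" using assms by (intro vnorm_add_le) simp
  finally show ?thesis by simp
qed

lemma vnorm_mult_mat_vec_le_abs_sum:
  assumes "dim_vec v = dim_col M"
  shows "vnorm (M *\<^sub>v v) \<le> (\<Sum>i<dim_row M. \<Sum>j<dim_col M. \<bar>M $$ (i, j)\<bar>) * vnorm v"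
proof -
  have "vnorm (M *\<^sub>v v) \<le> (\<Sum>i<dim_row M. \<bar>(M *\<^sub>v v) $ i\<bar>)"
    unfolding vnorm_eq_L2_set dim_mult_mat_vec by (rule L2_set_le_sum_abs)
  also have "\<dots> \<le> (\<Sum>i<dim_row M. (\<Sum>j<dim_col M. \<bar>M $$ (i, j)\<bar>) * vnorm v)"
  proof (rule sum_mono)
    fix i assume i: "i \<in> {..<dim_row M}"
    have "\<bar>(M *\<^sub>v v) $ i\<bar> = \<bar>\<Sum>j<dim_col M. M $$ (i, j) * v $ j\<bar>"
      using i assms by (simp add: scalar_prod_def lessThan_atLeast0)
    also have "\<dots> \<le> (\<Sum>j<dim_col M. \<bar>M $$ (i, j)\<bar> * \<bar>v $ j\<bar>)"
      by (rule order_trans[OF sum_abs]) (simp add: abs_mult)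
    also have "\<dots> \<le> (\<Sum>j<dim_col M. \<bar>M $$ (i, j)\<bar> * vnorm v)"
      using assms by (intro sum_mono mult_left_mono abs_index_le_vnorm) auto
    finally show "\<bar>(M *\<^sub>v v) $ i\<bar> \<le> (\<Sum>j<dim_col M. \<bar>M $$ (i, j)\<bar>) * vnorm v"
      by (simp add: sum_distrib_right)
  qed
  finally show ?thesis by (simp add: sum_distrib_right)
qed

lemma bdd_above_opnorm_set:
  "bdd_above {vnorm (M *\<^sub>v v) | v. dim_vec v = dim_col M \<and> vnorm v \<le> 1}"
proof (rule bdd_aboveI, safe)
  fix v :: "real vec" assume v: "dim_vec v = dim_col M" "vnorm v \<le> 1"
  let ?c = "\<Sum>i<dim_row M. \<Sum>j<dim_col M. \<bar>M $$ (i, j)\<bar>"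
  have "vnorm (M *\<^sub>v v) \<le> ?c * vnorm v" using v(1) by (rule vnorm_mult_mat_vec_le_abs_sum)
  also have "\<dots> \<le> ?c" using v(2) vnorm_nonneg by (intro mult_left_le) (auto intro: sum_nonneg)
  finally show "vnorm (M *\<^sub>v v) \<le> ?c" .
qed

lemma opnorm_set_nonempty:
  "vnorm (M *\<^sub>v 0\<^sub>v (dim_col M)) \<in> {vnorm (M *\<^sub>v v) | v. dim_vec v = dim_col M \<and> vnorm v \<le> 1}"
  by (auto intro!: exI[of _ "0\<^sub>v (dim_col M)"])

lemma opnorm_nonneg: "0 \<le> opnorm M"
proof -
  have "vnorm (M *\<^sub>v 0\<^sub>v (dim_col M)) \<le> opnorm M"
    unfolding opnorm_def by (rule cSup_upper[OF opnorm_set_nonempty bdd_above_opnorm_set])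
  then show ?thesis using vnorm_nonneg order_trans by blast
qed

lemma opnorm_le:
  assumes "0 \<le> c" and "\<And>v. dim_vec v = dim_col M \<Longrightarrow> vnorm (M *\<^sub>v v) \<le> c * vnorm v"
  shows "opnorm M \<le> c"
  unfolding opnorm_def
proof (rule cSup_least)
  show "{vnorm (M *\<^sub>v v) | v. dim_vec v = dim_col M \<and> vnorm v \<le> 1} \<noteq> {}"
    using opnorm_set_nonempty by blast
  fix x assume "x \<in> {vnorm (M *\<^sub>v v) | v. dim_vec v = dim_col M \<and> vnorm v \<le> 1}"
  then obtain v where v: "dim_vec v = dim_col M" "vnorm v \<le> 1" and x: "x = vnorm (M *\<^sub>v v)"
    by blast
  show "x \<le> c" using assms(2)[OF v(1)] mult_left_le[OF v(2) assms(1)] x by linarith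
qed

lemma vnorm_mult_mat_vec_le_opnorm:
  assumes v: "dim_vec v = dim_col M"
  shows "vnorm (M *\<^sub>v v) \<le> opnorm M * vnorm v"
proof (cases "vnorm v = 0")
  case True
  then have "v = 0\<^sub>v (dim_col M)" using vnorm_eq_0D v by metis
  then have "M *\<^sub>v v = 0\<^sub>v (dim_row M)" by (auto intro!: eq_vecI simp: scalar_prod_def)
  then show ?thesis using True by simp
next
  case False
  then have pos: "0 < vnorm v" using vnorm_nonneg by (simp add: order_less_le)
  define w where "w = (1 / vnorm v) \<cdot>\<^sub>v v"
  have "M *\<^sub>v w = (1 / vnorm v) \<cdot>\<^sub>v (M *\<^sub>v v)"
    unfolding w_def using v by (intro mult_mat_vec carrier_matI carrier_vecI) auto
  then have "vnorm (M *\<^sub>v v) / vnorm v = vnorm (M *\<^sub>v w)"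
    using pos by (simp add: vnorm_smult)
  also have "\<dots> \<le> opnorm M"
    unfolding opnorm_def using v pos
    by (intro cSup_upper[OF _ bdd_above_opnorm_set]) (auto simp: w_def vnorm_smult)
  finally show ?thesis using pos by (simp add: divide_le_eq)
qed

lemma opnorm_mult_le:
  assumes M: "M \<in> carrier_mat a b" and N: "N \<in> carrier_mat b c"
  shows "opnorm (M * N) \<le> opnorm M * opnorm N"
proof (rule opnorm_le)
  fix v :: "real vec" assume "dim_vec v = dim_col (M * N)"
  then have v: "v \<in> carrier_vec c" using N by auto
  have "vnorm ((M * N) *\<^sub>v v) = vnorm (M *\<^sub>v (N *\<^sub>v v))" using M N v by simp
  also have "\<dots> \<le> opnorm M * vnorm (N *\<^sub>v v)" using M N by (intro vnorm_mult_mat_vec_le_opnorm) auto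
  also have "\<dots> \<le> opnorm M * (opnorm N * vnorm v)"
    using N v by (intro mult_left_mono vnorm_mult_mat_vec_le_opnorm opnorm_nonneg) auto
  finally show "vnorm ((M * N) *\<^sub>v v) \<le> opnorm M * opnorm N * vnorm v" by (simp add: mult.assoc)
qed (simp add: opnorm_nonneg)

lemma opnorm_diff_le:
  assumes M: "M \<in> carrier_mat a b" and N: "N \<in> carrier_mat a b"
  shows "opnorm (M - N) \<le> opnorm M + opnorm N"
proof (rule opnorm_le)
  fix v :: "real vec" assume "dim_vec v = dim_col (M - N)"
  then have v: "v \<in> carrier_vec b" using N by auto
  have "vnorm ((M - N) *\<^sub>v v) = vnorm (M *\<^sub>v v - N *\<^sub>v v)"
    using M N v by (simp add: minus_mult_distrib_mat_vec)
  also have "\<dots> \<le> vnorm (M *\<^sub>v v) + vnorm (N *\<^sub>v v)" using M N by (intro vnorm_diff_le) auto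
  also have "\<dots> \<le> opnorm M * vnorm v + opnorm N * vnorm v"
    using M N v by (intro add_mono vnorm_mult_mat_vec_le_opnorm) auto
  finally show "vnorm ((M - N) *\<^sub>v v) \<le> (opnorm M + opnorm N) * vnorm v"
    by (simp add: distrib_right)
qed (simp add: opnorm_nonneg add_nonneg_nonneg)

section \<open>Symmetric and definite matrices\<close>

(* Dimension equations instead of carrier memberships let the simplifier discharge
   the side conditions when it reassociates products. *)
lemma assoc_mult_mat_dim:
  fixes A B C :: "'a :: semiring_0 mat"
  assumes "dim_col A = dim_row B" and "dim_col B = dim_row C"
  shows "A * B * C = A * (B * C)"
  using assms by (intro assoc_mult_mat[OF carrier_matI carrier_matI carrier_matI]) auto

lemma assoc_mult_mat_vec_dim:
  fixes A B :: "'a :: semiring_0 mat"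
  assumes "dim_col A = dim_row B" and "dim_vec v = dim_col B"
  shows "A * B *\<^sub>v v = A *\<^sub>v (B *\<^sub>v v)"
  using assms by (intro assoc_mult_mat_vec[OF carrier_matI carrier_matI carrier_vecI]) auto

lemma transpose_mult_dim:
  fixes A B :: "'a :: comm_semiring_0 mat"
  assumes "dim_col A = dim_row B"
  shows "transpose_mat (A * B) = transpose_mat B * transpose_mat A"
  using assms by (intro transpose_mult[OF carrier_matI carrier_matI]) auto

lemma scalar_prod_transpose_mult_mat_vec:
  fixes A :: "'a :: comm_semiring_0 mat"
  assumes "A \<in> carrier_mat m n" and "x \<in> carrier_vec n" and "y \<in> carrier_vec m"
  shows "x \<bullet> (transpose_mat A *\<^sub>v y) = (A *\<^sub>v x) \<bullet> y"
  using transpose_vec_mult_scalar[of "transpose_mat A" n m y x] assms by simp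

lemma sym_mat_bilinear_comm:
  assumes M: "sym_mat n M" and x: "x \<in> carrier_vec n" and y: "y \<in> carrier_vec n"
  shows "x \<bullet> (M *\<^sub>v y) = y \<bullet> (M *\<^sub>v x)"
proof -
  have Mc: "M \<in> carrier_mat n n" and MT: "transpose_mat M = M"
    using M unfolding sym_mat_def by auto
  have "x \<bullet> (M *\<^sub>v y) = (M *\<^sub>v x) \<bullet> y"
    using scalar_prod_transpose_mult_mat_vec[OF Mc x y] MT by simp
  also have "\<dots> = y \<bullet> (M *\<^sub>v x)" using Mc x y by (intro comm_scalar_prod[of _ n]) auto
  finally show ?thesis .
qed

lemma pd_mat_imp_psd_mat:
  assumes "pd_mat n M"
  shows "psd_mat n M"
  unfolding psd_mat_def
proof (intro conjI allI impI)
  show "sym_mat n M" using assms unfolding pd_mat_def by simp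
  fix x :: "real vec" assume x: "dim_vec x = n"
  show "0 \<le> x \<bullet> (M *\<^sub>v x)"
  proof (cases "x = 0\<^sub>v n")
    case True
    have "M *\<^sub>v x \<in> carrier_vec n" using assms unfolding pd_mat_def sym_mat_def by (auto intro!: carrier_vecI)
    then show ?thesis using True by simp
  next
    case False
    then show ?thesis using assms x unfolding pd_mat_def by (simp add: less_imp_le)
  qed
qed

lemma quadratic_form_add:
  fixes P R :: "'a :: comm_semiring_0 mat"
  assumes "P \<in> carrier_mat n n" and "R \<in> carrier_mat n n" and "x \<in> carrier_vec n"
  shows "x \<bullet> ((P + R) *\<^sub>v x) = x \<bullet> (P *\<^sub>v x) + x \<bullet> (R *\<^sub>v x)"
  using assms by (simp add: add_mult_distrib_mat_vec scalar_prod_add_distrib[of _ n])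

lemma sym_mat_add: "sym_mat n P \<Longrightarrow> sym_mat n R \<Longrightarrow> sym_mat n (P + R)"
  unfolding sym_mat_def by (auto simp: transpose_add)

lemma psd_mat_add:
  assumes "psd_mat n P" and "psd_mat n R"
  shows "psd_mat n (P + R)"
proof -
  have "P \<in> carrier_mat n n" "R \<in> carrier_mat n n"
    using assms unfolding psd_mat_def sym_mat_def by auto
  then show ?thesis
    using assms unfolding psd_mat_def
    by (auto simp: sym_mat_add quadratic_form_add[OF _ _ carrier_vecI] add_nonneg_nonneg)
qed

lemma psd_mat_add_pd_mat:
  assumes "psd_mat n P" and "pd_mat n R"
  shows "pd_mat n (P + R)"
proof -
  have "P \<in> carrier_mat n n" "R \<in> carrier_mat n n"
    using assms unfolding psd_mat_def pd_mat_def sym_mat_def by auto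
  then show ?thesis
    using assms unfolding psd_mat_def pd_mat_def
    by (auto simp: sym_mat_add quadratic_form_add[OF _ _ carrier_vecI] add_nonneg_pos)
qed

lemma quadratic_form_congruence:
  fixes C S :: "'a :: comm_semiring_0 mat"
  assumes C: "C \<in> carrier_mat m n" and S: "S \<in> carrier_mat m m" and x: "x \<in> carrier_vec n"
  shows "x \<bullet> ((transpose_mat C * S * C) *\<^sub>v x) = (C *\<^sub>v x) \<bullet> (S *\<^sub>v (C *\<^sub>v x))"
proof -
  have "(transpose_mat C * S * C) *\<^sub>v x = transpose_mat C *\<^sub>v (S *\<^sub>v (C *\<^sub>v x))"
    using C S x by (simp add: assoc_mult_mat_vec_dim)
  then show ?thesis using C S x by (simp add: scalar_prod_transpose_mult_mat_vec[OF C x])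
qed

lemma sym_mat_congruence:
  assumes "sym_mat m S" and "C \<in> carrier_mat m n"
  shows "sym_mat n (transpose_mat C * S * C)"
  using assms unfolding sym_mat_def by (auto simp: transpose_mult_dim assoc_mult_mat_dim)

lemma psd_mat_congruence:
  assumes S: "psd_mat m S" and C: "C \<in> carrier_mat m n"
  shows "psd_mat n (transpose_mat C * S * C)"
proof -
  have Sc: "S \<in> carrier_mat m m" using S unfolding psd_mat_def sym_mat_def by simp
  show ?thesis
    unfolding psd_mat_def
  proof (intro conjI allI impI)
    show "sym_mat n (transpose_mat C * S * C)"
      using S C unfolding psd_mat_def by (blast intro: sym_mat_congruence)
    fix x :: "real vec" assume "dim_vec x = n"
    then have x: "x \<in> carrier_vec n" by (rule carrier_vecI)
    have "0 \<le> (C *\<^sub>v x) \<bullet> (S *\<^sub>v (C *\<^sub>v x))" using S C unfolding psd_mat_def by simp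
    then show "0 \<le> x \<bullet> ((transpose_mat C * S * C) *\<^sub>v x)"
      by (simp add: quadratic_form_congruence[OF C Sc x])
  qed
qed

lemma pd_mat_congruence:
  assumes S: "pd_mat m S" and C: "C \<in> carrier_mat m n"
    and inj: "\<And>x. x \<in> carrier_vec n \<Longrightarrow> C *\<^sub>v x = 0\<^sub>v m \<Longrightarrow> x = 0\<^sub>v n"
  shows "pd_mat n (transpose_mat C * S * C)"
proof -
  have Sc: "S \<in> carrier_mat m m" using S unfolding pd_mat_def sym_mat_def by simp
  show ?thesis
    unfolding pd_mat_def
  proof (intro conjI allI impI)
    show "sym_mat n (transpose_mat C * S * C)"
      using S C unfolding pd_mat_def by (blast intro: sym_mat_congruence)
    fix x :: "real vec" assume dim: "dim_vec x = n" and nz: "x \<noteq> 0\<^sub>v n"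
    from dim have x: "x \<in> carrier_vec n" by (rule carrier_vecI)
    have "C *\<^sub>v x \<noteq> 0\<^sub>v m" using inj[OF x] nz by blast
    then have "0 < (C *\<^sub>v x) \<bullet> (S *\<^sub>v (C *\<^sub>v x))" using S C unfolding pd_mat_def by simp
    then show "0 < x \<bullet> ((transpose_mat C * S * C) *\<^sub>v x)"
      by (simp add: quadratic_form_congruence[OF C Sc x])
  qed
qed

lemma pd_mat_inverse_exists:
  assumes M: "pd_mat n M"
  shows "\<exists>X. X \<in> carrier_mat n n \<and> X * M = 1\<^sub>m n \<and> M * X = 1\<^sub>m n"
proof -
  have Mc: "M \<in> carrier_mat n n" using M unfolding pd_mat_def sym_mat_def by simp
  have det: "det M \<noteq> 0"
  proof
    assume "det M = 0"
    then obtain v where v: "v \<in> carrier_vec n" "v \<noteq> 0\<^sub>v n" "M *\<^sub>v v = 0\<^sub>v n"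
      using det_0_iff_vec_prod_zero[OF Mc] by blast
    have "0 < v \<bullet> (M *\<^sub>v v)"
      using M carrier_vecD[OF v(1)] v(2) unfolding pd_mat_def by blast
    then show False using v by simp
  qed
  define X where "X = (1 / det M) \<cdot>\<^sub>m adj_mat M"
  have Xc: "X \<in> carrier_mat n n" unfolding X_def using adj_mat(1)[OF Mc] by simp
  have "M * X = (1 / det M) \<cdot>\<^sub>m (M * adj_mat M)"
    unfolding X_def by (rule mult_smult_distrib[OF Mc adj_mat(1)[OF Mc]])
  also have "\<dots> = 1\<^sub>m n" unfolding adj_mat(2)[OF Mc] using det by (intro eq_matI) auto
  finally have MX: "M * X = 1\<^sub>m n" .
  then show ?thesis using Xc mat_mult_left_right_inverse[OF Mc Xc MX] by blast
qed

lemma minv_pd_mat: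
  assumes "pd_mat n M"
  shows "minv M \<in> carrier_mat n n" and "minv M * M = 1\<^sub>m n" and "M * minv M = 1\<^sub>m n"
proof -
  have "dim_row M = n" using assms unfolding pd_mat_def sym_mat_def by auto
  then have "minv M \<in> carrier_mat n n \<and> minv M * M = 1\<^sub>m n \<and> M * minv M = 1\<^sub>m n"
    unfolding minv_def using someI_ex[OF pd_mat_inverse_exists[OF assms]] by simp
  then show "minv M \<in> carrier_mat n n" "minv M * M = 1\<^sub>m n" "M * minv M = 1\<^sub>m n" by auto
qed

lemma sym_mat_inverse:
  assumes M: "sym_mat n M" and X: "X \<in> carrier_mat n n" and MX: "M * X = 1\<^sub>m n"
  shows "sym_mat n X"
proof -
  have Mc: "M \<in> carrier_mat n n" and MT: "transpose_mat M = M" using M unfolding sym_mat_def by auto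
  have XT: "transpose_mat X \<in> carrier_mat n n" using X by simp
  have "transpose_mat X * M = transpose_mat (M * X)"
    using transpose_mult[OF Mc X] MT by simp
  then have XTM: "transpose_mat X * M = 1\<^sub>m n" using MX by simp
  have "transpose_mat X = transpose_mat X * (M * X)" using MX XT by simp
  also have "\<dots> = (transpose_mat X * M) * X" using assoc_mult_mat[OF XT Mc X] by simp
  also have "\<dots> = X" using XTM X by simp
  finally show ?thesis using X unfolding sym_mat_def by simp
qed

lemma quadratic_form_diff:
  assumes P: "sym_mat n P" and z: "z \<in> carrier_vec n" and b: "b \<in> carrier_vec n"
  shows "(z - b) \<bullet> (P *\<^sub>v (z - b)) = z \<bullet> (P *\<^sub>v z) - 2 * (b \<bullet> (P *\<^sub>v z)) + b \<bullet> (P *\<^sub>v b)"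
proof -
  have Pc: "P \<in> carrier_mat n n" using P unfolding sym_mat_def by simp
  have Pz: "P *\<^sub>v z \<in> carrier_vec n" and Pb: "P *\<^sub>v b \<in> carrier_vec n" using Pc z b by auto
  have "(z - b) \<bullet> (P *\<^sub>v (z - b)) = (z - b) \<bullet> (P *\<^sub>v z) - (z - b) \<bullet> (P *\<^sub>v b)"
    using Pc z b Pz Pb by (simp add: mult_minus_distrib_mat_vec scalar_prod_minus_distrib[of _ n])
  also have "\<dots> = z \<bullet> (P *\<^sub>v z) - b \<bullet> (P *\<^sub>v z) - (z \<bullet> (P *\<^sub>v b) - b \<bullet> (P *\<^sub>v b))"
    using z b Pz Pb by (simp add: minus_scalar_prod_distrib[of _ n])
  also have "z \<bullet> (P *\<^sub>v b) = b \<bullet> (P *\<^sub>v z)" by (rule sym_mat_bilinear_comm[OF P z b])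
  finally show ?thesis by simp
qed

text \<open>Completing the square: with \<open>u = X w\<close> and \<open>b = B u\<close>,
  \<open>0 \<le> (z - b)\<^sup>T P (z - b) + u\<^sup>T R u = z\<^sup>T P z - w\<^sup>T X w\<close>.\<close>
lemma schur_complement_quadratic_le:
  assumes P: "psd_mat n P" and B: "B \<in> carrier_mat n p" and R: "psd_mat p R"
    and X: "X \<in> carrier_mat p p" and inv: "(transpose_mat B * P * B + R) * X = 1\<^sub>m p"
    and z: "z \<in> carrier_vec n"
  defines "w \<equiv> transpose_mat B *\<^sub>v (P *\<^sub>v z)"
  shows "w \<bullet> (X *\<^sub>v w) \<le> z \<bullet> (P *\<^sub>v z)"
proof -
  have Pc: "P \<in> carrier_mat n n" and Ps: "sym_mat n P"
    using P unfolding psd_mat_def sym_mat_def by auto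
  have Rc: "R \<in> carrier_mat p p" using R unfolding psd_mat_def sym_mat_def by simp
  let ?G = "transpose_mat B * P * B + R"
  have Gc: "?G \<in> carrier_mat p p" using B Pc Rc by auto
  define u where "u = X *\<^sub>v w"
  define b where "b = B *\<^sub>v u"
  have w: "w \<in> carrier_vec p" unfolding w_def using B Pc z by auto
  have u: "u \<in> carrier_vec p" unfolding u_def using X w by auto
  have b: "b \<in> carrier_vec n" unfolding b_def using B u by auto
  have Gu: "?G *\<^sub>v u = w"
    unfolding u_def using assoc_mult_mat_vec[OF Gc X w, symmetric] inv w by simp
  have "u \<bullet> w = u \<bullet> ((transpose_mat B * P * B) *\<^sub>v u) + u \<bullet> (R *\<^sub>v u)"
    unfolding Gu[symmetric] using B Pc Rc u by (intro quadratic_form_add) auto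
  also have "u \<bullet> ((transpose_mat B * P * B) *\<^sub>v u) = b \<bullet> (P *\<^sub>v b)"
    unfolding b_def by (rule quadratic_form_congruence[OF B Pc u])
  finally have uGu: "u \<bullet> w = b \<bullet> (P *\<^sub>v b) + u \<bullet> (R *\<^sub>v u)" .
  have bPz: "b \<bullet> (P *\<^sub>v z) = u \<bullet> w"
    unfolding b_def w_def using B Pc z u by (simp add: scalar_prod_transpose_mult_mat_vec[OF B u])
  have "0 \<le> (z - b) \<bullet> (P *\<^sub>v (z - b)) + u \<bullet> (R *\<^sub>v u)"
    using P R z b u unfolding psd_mat_def by (simp add: add_nonneg_nonneg)
  also have "\<dots> = z \<bullet> (P *\<^sub>v z) - u \<bullet> w"
    unfolding quadratic_form_diff[OF Ps z b] bPz using uGu by simp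
  also have "u \<bullet> w = w \<bullet> (X *\<^sub>v w)"
    unfolding u_def using X w by (intro comm_scalar_prod[of _ p]) auto
  finally show ?thesis by simp
qed

lemma psd_mat_schur_complement:
  assumes P: "psd_mat n P" and B: "B \<in> carrier_mat n p" and R: "psd_mat p R"
    and X: "sym_mat p X" and inv: "(transpose_mat B * P * B + R) * X = 1\<^sub>m p"
  shows "psd_mat n (P - P * B * X * transpose_mat B * P)"
proof -
  have Pc: "P \<in> carrier_mat n n" and PT: "transpose_mat P = P"
    and Xc: "X \<in> carrier_mat p p" and XT: "transpose_mat X = X"
    using P X unfolding psd_mat_def sym_mat_def by auto
  let ?W = "P * B * X * transpose_mat B * P"
  have Wc: "?W \<in> carrier_mat n n" using Pc B Xc by auto
  have "transpose_mat ?W = ?W"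
    using Pc B Xc PT XT by (simp add: transpose_mult_dim assoc_mult_mat_dim)
  then have sym: "sym_mat n (P - ?W)"
    unfolding sym_mat_def using Pc Wc PT by (simp add: transpose_minus minus_carrier_mat[OF Wc])
  have "0 \<le> z \<bullet> ((P - ?W) *\<^sub>v z)" if z: "z \<in> carrier_vec n" for z
  proof -
    define w where "w = transpose_mat B *\<^sub>v (P *\<^sub>v z)"
    have Pz: "P *\<^sub>v z \<in> carrier_vec n" and w: "w \<in> carrier_vec p"
      unfolding w_def using Pc B z by auto
    have "z \<bullet> (?W *\<^sub>v z) = z \<bullet> (transpose_mat P *\<^sub>v (B *\<^sub>v (X *\<^sub>v w)))"
      unfolding w_def using Pc B Xc z PT by (simp add: assoc_mult_mat_vec_dim)
    also have "\<dots> = (P *\<^sub>v z) \<bullet> (transpose_mat (transpose_mat B) *\<^sub>v (X *\<^sub>v w))"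
      using Pc B Xc z w by (simp add: scalar_prod_transpose_mult_mat_vec[OF Pc z])
    also have "\<dots> = w \<bullet> (X *\<^sub>v w)"
      using scalar_prod_transpose_mult_mat_vec[of "transpose_mat B" p n "P *\<^sub>v z" "X *\<^sub>v w"] B Xc Pz w
      unfolding w_def by simp
    finally have "z \<bullet> (?W *\<^sub>v z) = w \<bullet> (X *\<^sub>v w)" .
    moreover have "w \<bullet> (X *\<^sub>v w) \<le> z \<bullet> (P *\<^sub>v z)"
      unfolding w_def by (rule schur_complement_quadratic_le[OF P B R Xc inv z])
    ultimately show ?thesis
      using Pc Wc z by (simp add: minus_mult_distrib_mat_vec scalar_prod_minus_distrib[of _ n])
  qed
  then show ?thesis using sym unfolding psd_mat_def by (auto intro: carrier_vecI)
qed

section \<open>The Riccati recursion\<close>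

lemma ric_step_eq_congruence:
  fixes A B Q R P :: "real mat"
  defines "X \<equiv> minv (transpose_mat B * P * B + R)"
  assumes A: "A \<in> carrier_mat n n" and B: "B \<in> carrier_mat n p" and Q: "Q \<in> carrier_mat n n"
    and P: "P \<in> carrier_mat n n" and X: "X \<in> carrier_mat p p"
  shows "ric_step A B Q R P = Q + transpose_mat A * (P - P * B * X * transpose_mat B * P) * A"
proof -
  let ?W = "P * B * X * transpose_mat B * P"
  have W: "?W \<in> carrier_mat n n" using P B X by auto
  have "transpose_mat A * (P - ?W) * A = (transpose_mat A * P - transpose_mat A * ?W) * A"
    using A P W by (simp add: mult_minus_distrib_mat[of _ n n])
  also have "\<dots> = transpose_mat A * P * A - transpose_mat A * ?W * A"
    using A P W by (intro minus_mult_distrib_mat[of _ n n]) auto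
  also have "transpose_mat A * ?W * A = transpose_mat A * P * B * X * transpose_mat B * P * A"
    using A B P X by (simp add: assoc_mult_mat_dim)
  finally have "transpose_mat A * (P - ?W) * A
      = transpose_mat A * P * A - transpose_mat A * P * B * X * transpose_mat B * P * A" .
  then show ?thesis
    unfolding ric_step_def X_def[symmetric] using A B P Q X by (intro eq_matI) auto
qed

lemma psd_mat_ric_step:
  assumes A: "A \<in> carrier_mat n n" and B: "B \<in> carrier_mat n p"
    and Q: "psd_mat n Q" and R: "pd_mat p R" and P: "psd_mat n P"
  shows "psd_mat n (ric_step A B Q R P)"
proof -
  let ?G = "transpose_mat B * P * B + R"
  let ?X = "minv ?G"
  have G: "pd_mat p ?G" using psd_mat_congruence[OF P B] R by (rule psd_mat_add_pd_mat)
  have X: "?X \<in> carrier_mat p p" and GX: "?G * ?X = 1\<^sub>m p" using minv_pd_mat[OF G] by auto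
  have Xs: "sym_mat p ?X" using G X GX unfolding pd_mat_def by (blast intro: sym_mat_inverse)
  have "psd_mat n (P - P * B * ?X * transpose_mat B * P)"
    by (rule psd_mat_schur_complement[OF P B pd_mat_imp_psd_mat[OF R] Xs GX])
  then have "psd_mat n (transpose_mat A * (P - P * B * ?X * transpose_mat B * P) * A)"
    using A by (rule psd_mat_congruence)
  moreover have "Q \<in> carrier_mat n n" "P \<in> carrier_mat n n"
    using P Q unfolding psd_mat_def sym_mat_def by auto
  ultimately show ?thesis
    using Q A B X by (simp add: ric_step_eq_congruence psd_mat_add)
qed

lemma psd_mat_ric_P:
  assumes "A \<in> carrier_mat n n" and "B \<in> carrier_mat n p"
    and "psd_mat n Q" and "psd_mat n Qf" and "pd_mat p R"
  shows "psd_mat n (ric_P A B Q Qf R N k)"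
proof -
  have "psd_mat n (ric_back A B Q Qf R j)" for j
    by (induction j) (auto simp: assms(4) intro: psd_mat_ric_step[OF assms(1-3,5)])
  then show ?thesis unfolding ric_P_def .
qed

(* Since minv is a choice operator, the gain has these dimensions only because
   B^T P B + R is invertible, which is why the iterates P must stay semidefinite. *)
lemma ric_K_carrier:
  assumes A: "A \<in> carrier_mat n n" and B: "B \<in> carrier_mat n p"
    and "psd_mat n Q" and "psd_mat n Qf" and R: "pd_mat p R"
  shows "ric_K A B Q Qf R N k \<in> carrier_mat p n"
proof -
  let ?P = "ric_P A B Q Qf R N (Suc k)"
  have P: "psd_mat n ?P" using psd_mat_ric_P[OF assms] .
  have "pd_mat p (transpose_mat B * ?P * B + R)"
    using psd_mat_congruence[OF P B] R by (rule psd_mat_add_pd_mat)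
  then have "minv (transpose_mat B * ?P * B + R) \<in> carrier_mat p p" by (rule minv_pd_mat)
  moreover have "?P \<in> carrier_mat n n" using P unfolding psd_mat_def sym_mat_def by simp
  ultimately show ?thesis unfolding ric_K_def Let_def using A B by auto
qed

section \<open>Principal submatrices\<close>

lemma pick_inj_below:
  assumes i: "i < card {a. a < m \<and> a \<in> J}" and j: "j < card {a. a < m \<and> a \<in> J}"
    and eq: "pick J i = pick J j"
  shows "i = j"
proof -
  have "k < card J \<or> infinite J" if "k < card {a. a < m \<and> a \<in> J}" for k
  proof (cases "finite J")
    case True
    then have "card {a. a < m \<and> a \<in> J} \<le> card J" by (intro card_mono) auto
    then show ?thesis using that by simp
  qed simp
  then show ?thesis using card_pick i j eq by metis
qed

lemma sum_delta_mult_right: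
  "c < (m :: nat) \<Longrightarrow> (\<Sum>b = 0..<m. g b * (if b = c then 1 else 0)) = (g c :: 'a :: semiring_1)"
  by (simp add: if_distrib[of "times (g _)"] cong: if_cong)

lemma sum_delta_mult_left:
  "c < (m :: nat) \<Longrightarrow> (\<Sum>b = 0..<m. (if b = c then 1 else 0) * g b) = (g c :: 'a :: semiring_1)"
  by (simp add: if_distrib[of "\<lambda>x. x * g _"] cong: if_cong)

lemma pd_mat_submatrix:
  assumes R: "pd_mat m R"
  shows "pd_mat (card {j. j < m \<and> j \<in> J}) (submatrix R J J)"
proof -
  define p where "p = card {j. j < m \<and> j \<in> J}"
  have Rc: "R \<in> carrier_mat m m" using R unfolding pd_mat_def sym_mat_def by simp
  have pick_less: "pick J i < m" if "i < p" for i using that unfolding p_def by (rule pick_le)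
  define E :: "real mat" where "E = mat m p (\<lambda>(a, i). if a = pick J i then 1 else 0)"
  have E: "E \<in> carrier_mat m p" unfolding E_def by simp
  have ER: "(transpose_mat E * R) $$ (i, b) = R $$ (pick J i, b)" if "i < p" "b < m" for i b
    using that Rc pick_less[OF that(1)]
    by (simp add: E_def scalar_prod_def sum_delta_mult_left)
  have "submatrix R J J = transpose_mat E * R * E"
  proof (rule eq_matI)
    fix i j assume "i < dim_row (transpose_mat E * R * E)" "j < dim_col (transpose_mat E * R * E)"
    then have i: "i < p" and j: "j < p" using E by auto
    have "(transpose_mat E * R * E) $$ (i, j) = R $$ (pick J i, pick J j)"
      using i j E Rc pick_less[OF j]
      by (simp add: E_def scalar_prod_def ER sum_delta_mult_right)
        (rule sum_delta_mult_left[OF pick_less[OF i]])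
    then show "submatrix R J J $$ (i, j) = (transpose_mat E * R * E) $$ (i, j)"
      using i j Rc unfolding p_def by (simp add: submatrix_index)
  qed (use E Rc in \<open>auto simp: dim_submatrix p_def\<close>)
  moreover have "x = 0\<^sub>v p" if x: "x \<in> carrier_vec p" and Ex: "E *\<^sub>v x = 0\<^sub>v m" for x
  proof (rule eq_vecI)
    fix i assume "i < dim_vec (0\<^sub>v p)"
    then have i: "i < p" by simp
    have "(E *\<^sub>v x) $ pick J i = (\<Sum>j = 0..<p. (if pick J i = pick J j then 1 else 0) * x $ j)"
      using x pick_less[OF i] by (simp add: E_def scalar_prod_def)
    also have "\<dots> = (\<Sum>j = 0..<p. (if j = i then 1 else 0) * x $ j)"
      using i pick_inj_below[of _ m J] unfolding p_def by (intro sum.cong) auto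
    finally show "x $ i = 0\<^sub>v p $ i" using Ex i pick_less[OF i] by (simp add: sum_delta_mult_left)
  qed (use x in auto)
  ultimately show ?thesis
    unfolding p_def[symmetric] using pd_mat_congruence[OF R E] by simp
qed

section \<open>Closed-loop transition matrices\<close>

lemma psi_same [simp]: "psi A B K k k = 1\<^sub>m (dim_row A)"
  by (cases k) auto

lemma psi_carrier:
  assumes A: "A \<in> carrier_mat n n" and B: "B \<in> carrier_mat n p"
    and K: "\<And>k. k < N \<Longrightarrow> K k \<in> carrier_mat p n" and "k2 \<le> N"
  shows "psi A B K k2 k1 \<in> carrier_mat n n"
  using \<open>k2 \<le> N\<close>
proof (induction k2)
  case (Suc k)
  then have "A + B * K k \<in> carrier_mat n n" using A B K by auto
  with Suc show ?case using A by (auto intro: mult_carrier_mat)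
qed (use A in simp)

lemma psi_Suc_right:
  assumes A: "A \<in> carrier_mat n n" and B: "B \<in> carrier_mat n p"
    and K: "\<And>k. k < N \<Longrightarrow> K k \<in> carrier_mat p n" and "k1 < k2" and "k2 \<le> N"
  shows "psi A B K k2 k1 = psi A B K k2 (Suc k1) * (A + B * K k1)"
  using \<open>k1 < k2\<close> \<open>k2 \<le> N\<close>
proof (induction k2)
  case (Suc k)
  have M1: "A + B * K k1 \<in> carrier_mat n n" using A B K Suc.prems by auto
  show ?case
  proof (cases "k = k1")
    case True
    then show ?thesis using A M1 by (simp add: right_mult_one_mat[OF M1] left_mult_one_mat[OF M1])
  next
    case False
    then have k1: "k1 < k" using Suc.prems by simp
    have M: "A + B * K k \<in> carrier_mat n n" using A B K Suc.prems by auto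
    have P: "psi A B K k (Suc k1) \<in> carrier_mat n n"
      using psi_carrier[OF A B K] Suc.prems by simp
    have "psi A B K (Suc k) k1 = (A + B * K k) * (psi A B K k (Suc k1) * (A + B * K k1))"
      using Suc k1 by simp
    also have "\<dots> = psi A B K (Suc k) (Suc k1) * (A + B * K k1)"
      using k1 by (simp add: assoc_mult_mat[OF M P M1])
    finally show ?thesis .
  qed
qed simp

lemma psi_perturbation_step:
  assumes A: "A \<in> carrier_mat n n" and B: "B \<in> carrier_mat n p"
    and K: "\<And>k. k < N \<Longrightarrow> K k \<in> carrier_mat p n"
    and Kh: "\<And>k. k < N \<Longrightarrow> Kh k \<in> carrier_mat p n"
    and j: "k1 \<le> j" "j < k2" and k2: "k2 \<le> N"
  shows "psi A B K k2 (Suc j) * psi A B Kh (Suc j) k1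
    = psi A B K k2 j * psi A B Kh j k1 - psi A B K k2 (Suc j) * (B * (K j - Kh j) * psi A B Kh j k1)"
proof -
  let ?P = "psi A B K k2 (Suc j)" and ?Ph = "psi A B Kh j k1" and ?D = "B * (K j - Kh j)"
  have Kj: "K j \<in> carrier_mat p n" and Khj: "Kh j \<in> carrier_mat p n" using K Kh j k2 by auto
  have P: "?P \<in> carrier_mat n n" using psi_carrier[OF A B K k2] .
  have Ph: "?Ph \<in> carrier_mat n n" using psi_carrier[OF A B Kh] j k2 by simp
  have M: "A + B * K j \<in> carrier_mat n n" and D: "?D \<in> carrier_mat n n" using A B Kj Khj by auto
  have "A + B * Kh j = (A + B * K j) - ?D"
    using A B Kj Khj by (simp add: mult_minus_distrib_mat[OF B]) (intro eq_matI, auto)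
  then have "?P * psi A B Kh (Suc j) k1 = ?P * ((A + B * K j) * ?Ph - ?D * ?Ph)"
    using j M D Ph by (simp add: minus_mult_distrib_mat)
  also have "\<dots> = ?P * ((A + B * K j) * ?Ph) - ?P * (?D * ?Ph)"
    using M D Ph by (intro mult_minus_distrib_mat[OF P, of _ n]) auto
  also have "?P * ((A + B * K j) * ?Ph) = (?P * (A + B * K j)) * ?Ph"
    by (rule assoc_mult_mat[OF P M Ph, symmetric])
  also have "?P * (A + B * K j) = psi A B K k2 j"
    using psi_Suc_right[OF A B K] j k2 by simp
  finally show ?thesis .
qed

lemma opnorm_psi_perturbed_le:
  assumes A: "A \<in> carrier_mat n n" and B: "B \<in> carrier_mat n p"
    and K: "\<And>k. k < N \<Longrightarrow> K k \<in> carrier_mat p n"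
    and Kh: "\<And>k. k < N \<Longrightarrow> Kh k \<in> carrier_mat p n"
    and k: "k1 \<le> k2" "k2 \<le> N"
  shows "opnorm (psi A B Kh k2 k1) \<le> opnorm (psi A B K k2 k1)
    + (\<Sum>j = k1..<k2. opnorm (psi A B K k2 (Suc j)) * opnorm (B * (K j - Kh j))
                         * opnorm (psi A B Kh j k1))"
proof -
  let ?X = "\<lambda>i. psi A B K k2 i * psi A B Kh i k1"
  let ?e = "\<lambda>j. opnorm (psi A B K k2 (Suc j)) * opnorm (B * (K j - Kh j)) * opnorm (psi A B Kh j k1)"
  have PK: "psi A B K a b \<in> carrier_mat n n" if "a \<le> N" for a b
    using psi_carrier[where K = K, OF A B K that] .
  have PKh: "psi A B Kh a b \<in> carrier_mat n n" if "a \<le> N" for a b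
    using psi_carrier[where K = Kh, OF A B Kh that] .
  have "i \<le> k2 \<Longrightarrow> opnorm (?X i) \<le> opnorm (psi A B K k2 k1) + (\<Sum>j = k1..<i. ?e j)"
    if "k1 \<le> i" for i
    using that
  proof (induction i rule: dec_induct)
    case base
    show ?case using A right_mult_one_mat[OF PK[OF k(2)]] by simp
  next
    case (step j)
    let ?P = "psi A B K k2 (Suc j)" and ?Ph = "psi A B Kh j k1" and ?D = "B * (K j - Kh j)"
    have P: "?P \<in> carrier_mat n n" and Ph: "?Ph \<in> carrier_mat n n"
      using PK PKh step k by auto
    have D: "?D \<in> carrier_mat n n" using B K[of j] Kh[of j] step k by auto
    have "?X (Suc j) = ?X j - ?P * (?D * ?Ph)"
      using psi_perturbation_step[where K = K and Kh = Kh, OF A B K Kh] step k by simp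
    also have "opnorm \<dots> \<le> opnorm (?X j) + opnorm (?P * (?D * ?Ph))"
      using mult_carrier_mat[OF PK PKh] mult_carrier_mat[OF P mult_carrier_mat[OF D Ph]] step k
      by (intro opnorm_diff_le) auto
    also have "opnorm (?P * (?D * ?Ph)) \<le> ?e j"
    proof -
      have "opnorm (?P * (?D * ?Ph)) \<le> opnorm ?P * opnorm (?D * ?Ph)"
        using P mult_carrier_mat[OF D Ph] by (rule opnorm_mult_le)
      also have "\<dots> \<le> opnorm ?P * (opnorm ?D * opnorm ?Ph)"
        using D Ph by (intro mult_left_mono opnorm_mult_le opnorm_nonneg)
      finally show ?thesis by (simp add: mult.assoc)
    qed
    finally show ?case using step by simp
  qed
  from this[of k2] show ?thesis
    using k left_mult_one_mat[OF PKh[OF k(2)]] A by simp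
qed

lemma discrete_gronwall_geometric:
  fixes a :: "nat \<Rightarrow> real"
  assumes rec: "\<And>d. d \<le> D \<Longrightarrow> a d \<le> \<zeta> * \<eta> ^ d + (\<Sum>l<d. \<zeta> * \<eta> ^ (d - Suc l) * \<beta> * a l)"
    and \<zeta>: "0 \<le> \<zeta>" and \<eta>: "0 \<le> \<eta>" and \<beta>: "0 \<le> \<beta>" and gap: "\<zeta> * \<beta> \<le> \<rho> - \<eta>"
  shows "a D \<le> \<zeta> * \<rho> ^ D"
proof -
  have \<rho>: "0 \<le> \<rho>" using gap \<zeta> \<beta> \<eta> by (smt (verit) mult_nonneg_nonneg)
  have "a d \<le> \<zeta> * \<rho> ^ d" if "d \<le> D" for d
    using that
  proof (induction d rule: less_induct)
    case (less d)
    have "(\<Sum>l<d. \<zeta> * \<eta> ^ (d - Suc l) * \<beta> * a l)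
        \<le> (\<Sum>l<d. (\<rho> - \<eta>) * (\<zeta> * (\<eta> ^ (d - Suc l) * \<rho> ^ l)))"
    proof (rule sum_mono)
      fix l assume "l \<in> {..<d}"
      then have "a l \<le> \<zeta> * \<rho> ^ l" using less by simp
      then have "\<zeta> * \<eta> ^ (d - Suc l) * \<beta> * a l \<le> \<zeta> * \<eta> ^ (d - Suc l) * \<beta> * (\<zeta> * \<rho> ^ l)"
        using \<zeta> \<eta> \<beta> by (intro mult_left_mono) auto
      also have "\<dots> = (\<zeta> * \<beta>) * (\<zeta> * (\<eta> ^ (d - Suc l) * \<rho> ^ l))" by (simp add: mult_ac)
      also have "\<dots> \<le> (\<rho> - \<eta>) * (\<zeta> * (\<eta> ^ (d - Suc l) * \<rho> ^ l))"
        using gap \<zeta> \<eta> \<rho> by (intro mult_right_mono) auto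
      finally show "\<zeta> * \<eta> ^ (d - Suc l) * \<beta> * a l \<le> (\<rho> - \<eta>) * (\<zeta> * (\<eta> ^ (d - Suc l) * \<rho> ^ l))" .
    qed
    also have "\<dots> = \<zeta> * (\<rho> ^ d - \<eta> ^ d)"
      by (simp add: power_diff_sumr2 sum_distrib_left mult_ac)
    finally show ?case using rec[OF less.prems] by (simp add: algebra_simps)
  qed
  then show ?thesis by simp
qed

lemma opnorm_psi_perturbed_geometric:
  assumes A: "A \<in> carrier_mat n n" and B: "B \<in> carrier_mat n p"
    and K: "\<And>k. k < N \<Longrightarrow> K k \<in> carrier_mat p n"
    and Kh: "\<And>k. k < N \<Longrightarrow> Kh k \<in> carrier_mat p n"
    and psi_bound: "\<And>k1 k2. k1 \<le> k2 \<Longrightarrow> k2 \<le> N \<Longrightarrow> opnorm (psi A B K k2 k1) \<le> \<zeta> * \<eta> ^ (k2 - k1)"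
    and gain_close: "\<And>k. k < N \<Longrightarrow> opnorm (B * (K k - Kh k)) \<le> \<beta>"
    and \<zeta>: "0 \<le> \<zeta>" and \<eta>: "0 \<le> \<eta>" and \<beta>: "0 \<le> \<beta>" and gap: "\<zeta> * \<beta> \<le> \<rho> - \<eta>"
    and k: "k1 \<le> k2" "k2 \<le> N"
  shows "opnorm (psi A B Kh k2 k1) \<le> \<zeta> * \<rho> ^ (k2 - k1)"
proof -
  define a where "a d = opnorm (psi A B Kh (k1 + d) k1)" for d
  have "a d \<le> \<zeta> * \<eta> ^ d + (\<Sum>l<d. \<zeta> * \<eta> ^ (d - Suc l) * \<beta> * a l)" if d: "d \<le> k2 - k1" for d
  proof -
    have N: "k1 + d \<le> N" using d k by simp
    have "a d \<le> opnorm (psi A B K (k1 + d) k1)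
        + (\<Sum>j = k1..<k1 + d. opnorm (psi A B K (k1 + d) (Suc j)) * opnorm (B * (K j - Kh j))
                                * opnorm (psi A B Kh j k1))"
      unfolding a_def using N by (intro opnorm_psi_perturbed_le[OF A B K Kh]) auto
    also have "\<dots> \<le> \<zeta> * \<eta> ^ d + (\<Sum>j = k1..<k1 + d. \<zeta> * \<eta> ^ (k1 + d - Suc j) * \<beta> * opnorm (psi A B Kh j k1))"
    proof (rule add_mono)
      show "opnorm (psi A B K (k1 + d) k1) \<le> \<zeta> * \<eta> ^ d" using psi_bound[of k1 "k1 + d"] N by simp
      have "opnorm (psi A B K (k1 + d) (Suc j)) * opnorm (B * (K j - Kh j))
          \<le> \<zeta> * \<eta> ^ (k1 + d - Suc j) * \<beta>" if "j \<in> {k1..<k1 + d}" for j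
        using that N \<zeta> \<eta> by (intro mult_mono psi_bound gain_close) (auto simp: opnorm_nonneg)
      then show "(\<Sum>j = k1..<k1 + d. opnorm (psi A B K (k1 + d) (Suc j)) * opnorm (B * (K j - Kh j))
                                * opnorm (psi A B Kh j k1))
          \<le> (\<Sum>j = k1..<k1 + d. \<zeta> * \<eta> ^ (k1 + d - Suc j) * \<beta> * opnorm (psi A B Kh j k1))"
        by (intro sum_mono mult_right_mono) (auto simp: opnorm_nonneg)
    qed
    also have "(\<Sum>j = k1..<k1 + d. \<zeta> * \<eta> ^ (k1 + d - Suc j) * \<beta> * opnorm (psi A B Kh j k1))
        = (\<Sum>l<d. \<zeta> * \<eta> ^ (d - Suc l) * \<beta> * a l)"
      unfolding a_def by (rule sum.reindex_bij_witness[of _ "\<lambda>l. k1 + l" "\<lambda>j. j - k1"]) (auto simp: add.commute)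
    finally show ?thesis .
  qed
  then have "a (k2 - k1) \<le> \<zeta> * \<rho> ^ (k2 - k1)"
    using \<zeta> \<eta> \<beta> gap by (rule discrete_gronwall_geometric)
  then show ?thesis unfolding a_def using k by simp
qed

theorem lemma6:
  fixes n q H N T t :: nat
    and ms :: "nat \<Rightarrow> nat"
    and A B Ahat Bhat :: "real mat"
    and Q Qf R :: "nat \<Rightarrow> real mat"
    and S :: "nat set"
    and \<epsilon> \<zeta> \<eta> :: real
  defines "m \<equiv> blk_off ms q"
  defines "BS \<equiv> B_sel ms B S"
  defines "BhS \<equiv> B_sel ms Bhat S"
  defines "K \<equiv> ric_K A BS (Q t) (Qf t) (R_sel ms (R t) S) N"
  defines "Khat \<equiv> ric_K Ahat BhS (Q t) (Qf t) (R_sel ms (R t) S) N"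
  assumes blocks: "\<forall>i<q. ms i \<ge> 1"
    and dimA: "A \<in> carrier_mat n n" and dimB: "B \<in> carrier_mat n m"
    and dimAhat: "Ahat \<in> carrier_mat n n" and dimBhat: "Bhat \<in> carrier_mat n m"
    and H_pos: "H \<ge> 1" and N_pos: "N \<ge> 1" and T_pos: "T \<ge> 1"
    and costs: "\<forall>s\<in>{1..T}. psd_mat n (Q s) \<and> psd_mat n (Qf s) \<and> pd_mat m (R s)"
    and assm1: "\<forall>s\<in>{1..T}. pd_mat n (Qf s) \<and> sigma_n (Q s) \<ge> 1 \<and> sigma_n (R s) \<ge> 1"
    and assm2: "\<exists>l\<in>{1..n-1}. \<exists>\<nu>>0. \<forall>S'. S' \<subseteq> {0..<q} \<and> card S' = H \<longrightarrow>
                   sigma_n (ctrb A (B_sel ms B S') l) \<ge> \<nu>"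
    and S_sub: "S \<subseteq> {0..<q}" and S_card: "card S = H"
    and t_in: "t \<in> {1..T}"
    and eps_pos: "\<epsilon> > 0"
    and K_close: "\<forall>k<N. opnorm (K k - Khat k) \<le> \<epsilon>"
    and zeta: "\<zeta> \<ge> 1" and eta: "0 < \<eta>" "\<eta> < 1"
    and Psi_bound: "\<forall>k1 k2. k1 \<le> k2 \<and> k2 \<le> N \<longrightarrow>
                      opnorm (psi A BS K k2 k1) \<le> \<zeta> * \<eta> ^ (k2 - k1)"
    and eps_small: "\<epsilon> \<le> (1 - \<eta>) / (2 * opnorm BS * \<zeta>)"
  shows "\<forall>k1 k2. k1 \<le> k2 \<and> k2 \<le> N \<longrightarrow>
           opnorm (psi A BS Khat k2 k1) \<le> \<zeta> * ((1 + \<eta>) / 2) ^ (k2 - k1)"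
proof -
  define p where "p = card {j. j < m \<and> j \<in> blk_cols ms S}"
  have Q: "psd_mat n (Q t)" and Qf: "psd_mat n (Qf t)" and R: "pd_mat m (R t)"
    using costs t_in by auto
  have RS: "pd_mat p (R_sel ms (R t) S)"
    unfolding R_sel_def p_def by (rule pd_mat_submatrix[OF R])
  have BS: "BS \<in> carrier_mat n p" and BhS: "BhS \<in> carrier_mat n p"
    using dimB dimBhat unfolding BS_def BhS_def B_sel_def p_def by (auto simp: dim_submatrix)
  have K: "K k \<in> carrier_mat p n" and Khat: "Khat k \<in> carrier_mat p n" for k
    unfolding K_def Khat_def using ric_K_carrier dimA dimAhat BS BhS Q Qf RS by auto
  have gain_close: "opnorm (BS * (K k - Khat k)) \<le> opnorm BS * \<epsilon>" if "k < N" for k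
    using opnorm_mult_le[OF BS minus_carrier_mat[OF Khat]] K_close that opnorm_nonneg[of BS]
    by (meson mult_left_mono order_trans)
  have gap: "\<zeta> * (opnorm BS * \<epsilon>) \<le> (1 + \<eta>) / 2 - \<eta>"
  proof (cases "opnorm BS = 0")
    case False
    then have "0 < 2 * opnorm BS * \<zeta>" using opnorm_nonneg[of BS] zeta by simp
    then show ?thesis using eps_small by (simp add: le_divide_eq mult_ac)
  qed (use eta in simp)
  show ?thesis
  proof (intro allI impI, elim conjE)
    fix k1 k2 :: nat assume "k1 \<le> k2" "k2 \<le> N"
    then show "opnorm (psi A BS Khat k2 k1) \<le> \<zeta> * ((1 + \<eta>) / 2) ^ (k2 - k1)"
      using Psi_bound zeta eta eps_pos opnorm_nonneg[of BS]
      by (intro opnorm_psi_perturbed_geometric[where K = K and Kh = Khat,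
            OF dimA BS K Khat _ gain_close _ _ _ gap]) auto
  qed
qed

end
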